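(* As $n\to\infty$, $B_2(n,2,3;3)=\Theta(2^n)$.
   Context: For a prime power $q$, $\mathcal{G}_q(n,k)$ denotes the set of all $k$-dimensional subspaces of $\mathbb{F}_q^n$. An $\alpha$-$(n,k,\delta)_q^c$ covering Grassmannian code is a subset $\mathcal{C}\subseteq\mathcal{G}_q(n,k)$ (no repeated codewords) such that every set of $\alpha$ distinct codewords of $\mathcal{C}$ spans a subspace of $\mathbb{F}_q^n$ of dimension at least $k+\delta$. $B_q(n,k,\delta;\alpha)$ denotes the maximum size of an $\alpha$-$(n,k,\delta)_q^c$ code. *)

theory Defs
  imports Main "HOL-Library.Function_Algebras" "HOL-Library.Z2" "HOL-Library.Landau_Symbols"
begin

text \<open>Vectors of F_q^n are represented as functions nat => 'a (field 'a) vanishing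
  outside the coordinates 0..n-1; the vector space structure is pointwise.\<close>

definition fvec_scale :: "'a::field \<Rightarrow> (nat \<Rightarrow> 'a) \<Rightarrow> (nat \<Rightarrow> 'a)" where
  "fvec_scale c v = (\<lambda>i. c * v i)"

definition ambient :: "nat \<Rightarrow> (nat \<Rightarrow> 'a::field) set" where
  "ambient n = {v. \<forall>i\<ge>n. v i = 0}"

definition grass :: "nat \<Rightarrow> nat \<Rightarrow> (nat \<Rightarrow> 'a::field) set set" where
  "grass n k = {W. W \<subseteq> ambient n \<and> module.subspace fvec_scale W
                   \<and> vector_space.dim fvec_scale W = k}"

definition covering_code :: "nat \<Rightarrow> nat \<Rightarrow> nat \<Rightarrow> nat \<Rightarrow> (nat \<Rightarrow> 'a::field) set set \<Rightarrow> bool" where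
  "covering_code n k \<delta> \<alpha> C \<longleftrightarrow> C \<subseteq> grass n k \<and>
     (\<forall>A \<subseteq> C. card A = \<alpha> \<longrightarrow>
        k + \<delta> \<le> vector_space.dim fvec_scale (module.span fvec_scale (\<Union>A)))"

definition B2 :: "nat \<Rightarrow> nat \<Rightarrow> nat \<Rightarrow> nat \<Rightarrow> nat" where
  "B2 n k \<delta> \<alpha> = Max {card C | C :: (nat \<Rightarrow> bit) set set. covering_code n k \<delta> \<alpha> C}"

end

theory Submission
  imports Defs "HOL-Library.FuncSet"
begin

text \<open>
  Upper bound: each codeword contains a nonzero vector, and three planes through a common nonzero
  vector span at most four dimensions. So a nonzero vector chosen from each codeword is shared by
  at most two codewords, and a code has at most \<open>2 q^n\<close> codewords.

  Lower bound: for \<open>a \<in> F_2^m\<close> take the plane spanned by \<open>g_a = (1, 0, a)\<close> and its shift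
  \<open>(0, 1, 0, a)\<close> in \<open>F_2^(m+3)\<close>. For distinct \<open>a, b, c\<close> the span of three such planes
  contains \<open>g_a\<close>, its shift, \<open>p = g_a + g_b\<close>, \<open>q = g_a + g_c\<close> and the shift of whichever of
  \<open>p, q\<close> has the larger support; these five vectors are independent by an echelon argument.
  This gives \<open>2^m\<close> codewords in length \<open>m + 3\<close>.
\<close>

interpretation V: vector_space "fvec_scale :: 'a::field \<Rightarrow> (nat \<Rightarrow> 'a) \<Rightarrow> (nat \<Rightarrow> 'a)"
  by unfold_locales (auto simp: fvec_scale_def fun_eq_iff algebra_simps)

lemma (in vector_space) ex_nonzero_if_dim_pos:
  assumes "0 < dim U"
  shows "\<exists>v\<in>U. v \<noteq> 0"
proof (rule ccontr)
  assume "\<not> ?thesis"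
  then have "U \<subseteq> span {}" by auto
  then have "dim U \<le> card ({} :: 'b set)" by (rule dim_le_card) simp
  with assms show False by simp
qed

lemma (in vector_space) dim_2_subset_span_pair:
  assumes "dim U = 2" "v \<in> U" "v \<noteq> 0"
  obtains x where "U \<subseteq> span {v, x}"
proof -
  obtain B where B: "{v} \<subseteq> B" "B \<subseteq> U" "independent B" "U \<subseteq> span B"
    using maximal_independent_subset_extend[of "{v}" U] assms by auto
  have "card B = 2" using basis_card_eq_dim[OF B(2) B(4) B(3)] assms(1) by simp
  then obtain x y where "B = {x, y}" by (auto simp: card_2_iff)
  with B(1) have "B \<subseteq> {v, if x = v then y else x}" by auto
  with B(4) show thesis using that span_mono by blast
qed

lemma (in vector_space) dim_span_union3_le_4:
  assumes "dim U1 = 2" "dim U2 = 2" "dim U3 = 2"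
    and "v \<in> U1" "v \<in> U2" "v \<in> U3" "v \<noteq> 0"
  shows "dim (span (U1 \<union> U2 \<union> U3)) \<le> 4"
proof -
  obtain x1 x2 x3 where "U1 \<subseteq> span {v, x1}" "U2 \<subseteq> span {v, x2}" "U3 \<subseteq> span {v, x3}"
    using dim_2_subset_span_pair assms by metis
  moreover have "span {v, x} \<subseteq> span {v, x1, x2, x3}" if "x \<in> {x1, x2, x3}" for x
    using that by (intro span_mono) auto
  ultimately have "U1 \<union> U2 \<union> U3 \<subseteq> span {v, x1, x2, x3}" by blast
  then have "dim (U1 \<union> U2 \<union> U3) \<le> card {v, x1, x2, x3}" by (rule dim_le_card) simp
  also have "\<dots> \<le> 4" using card_length[of "[v, x1, x2, x3]"] by simp
  finally show ?thesis by simp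
qed

lemma (in vector_space) card_le_dim_if_independent:
  assumes "finite S" "independent B" "B \<subseteq> S"
  shows "card B \<le> dim S"
proof -
  obtain A where A: "A \<subseteq> S" "independent A" "S \<subseteq> span A" "card A = dim S"
    by (rule basis_exists)
  have "finite A" using A(1) assms(1) by (rule finite_subset)
  then show ?thesis
    using independent_span_bound[of A B] assms(2,3) A(3,4) by auto
qed

lemma card_le_mult_card_image:
  assumes "finite A" "\<And>y. card {x\<in>A. f x = y} \<le> k"
  shows "card A \<le> k * card (f ` A)"
proof -
  have "card A = card (\<Union>y\<in>f ` A. {x\<in>A. f x = y})" by (rule arg_cong[of _ _ card]) auto
  also have "\<dots> \<le> (\<Sum>y\<in>f ` A. card {x\<in>A. f x = y})" using assms(1) by (intro card_UN_le) simp
  also have "\<dots> \<le> (\<Sum>y\<in>f ` A. k)" using assms(2) by (intro sum_mono)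
  finally show ?thesis by (simp add: mult.commute)
qed

lemma subspace_vanishing: "V.subspace {v. \<forall>i\<in>I. v i = 0}"
  unfolding V.subspace_def by (auto simp: fvec_scale_def)

lemma vanishing_on_span:
  assumes "\<forall>x\<in>X. x i = 0" "v \<in> V.span X"
  shows "v i = 0"
  using V.span_minimal[OF _ subspace_vanishing[of "{i}"]] assms by auto

lemma span_pair_elim:
  assumes "v \<in> V.span {x, y}"
  obtains s t where "v = fvec_scale s x + fvec_scale t y"
proof -
  obtain s where "v - fvec_scale s x \<in> V.span {y}" using assms V.span_breakdown_eq by blast
  then obtain t where "v - fvec_scale s x = fvec_scale t y" by (auto simp: V.span_singleton)
  then show thesis using that[of s t] by (simp add: algebra_simps)
qed

lemma independent_insert_pivot:
  assumes "V.independent X" "\<forall>x\<in>X. x i = 0" "v i \<noteq> 0"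
  shows "V.independent (insert v X)" "v \<notin> X"
proof -
  have "v \<notin> V.span X" using assms(2,3) vanishing_on_span by blast
  then show "V.independent (insert v X)" using assms(1) by (rule V.independent_insertI)
  show "v \<notin> X" using assms(2,3) by blast
qed

lemma ambient_subspace: "V.subspace (ambient n)"
  unfolding V.subspace_def ambient_def by (auto simp: fvec_scale_def)

lemma ambient_mono: "m \<le> n \<Longrightarrow> ambient m \<subseteq> ambient n"
  by (auto simp: ambient_def)

lemma ex_last_nonzero_coord:
  assumes "p \<in> ambient n" "q \<in> ambient n" "p \<noteq> 0"
  obtains t where "p t \<noteq> 0 \<or> q t \<noteq> 0" "\<And>i. t < i \<Longrightarrow> p i = 0 \<and> q i = 0"
proof -
  obtain i where "p i \<noteq> 0" using assms(3) by (auto simp: fun_eq_iff)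
  then have "\<exists>t. (p t \<noteq> 0 \<or> q t \<noteq> 0) \<and> (\<forall>i. p i \<noteq> 0 \<or> q i \<noteq> 0 \<longrightarrow> i \<le> t)"
    using assms(1,2)
    by (intro ex_has_greatest_nat[where b = n]) (auto simp: ambient_def not_le[symmetric])
  then show thesis using that by (meson not_le)
qed

lemma bij_betw_ambient_PiE:
  "bij_betw (\<lambda>v. restrict v {..<n}) (ambient n) ({..<n} \<rightarrow>\<^sub>E (UNIV :: 'a::field set))"
  by (rule bij_betw_byWitness[where f' = "\<lambda>f i. if i < n then f i else 0"])
     (auto simp: ambient_def fun_eq_iff PiE_def extensional_def)

lemma card_ambient: "card (ambient n :: (nat \<Rightarrow> 'a::{finite,field}) set) = card (UNIV :: 'a set) ^ n"
  using bij_betw_same_card[OF bij_betw_ambient_PiE] by (simp add: card_PiE)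

lemma finite_ambient: "finite (ambient n :: (nat \<Rightarrow> 'a::{finite,field}) set)"
proof (rule card_ge_0_finite)
  show "0 < card (ambient n :: (nat \<Rightarrow> 'a) set)" by (simp add: card_ambient finite_UNIV_card_ge_0)
qed

lemma covering_code_card_le:
  fixes C :: "(nat \<Rightarrow> 'a::{finite,field}) set set"
  assumes code: "covering_code n 2 3 3 C"
  shows "card C \<le> 2 * card (UNIV :: 'a set) ^ n"
proof -
  have grass: "C \<subseteq> grass n 2" using code by (simp add: covering_code_def)
  then have "C \<subseteq> Pow (ambient n)" by (auto simp: grass_def)
  then have "finite C" by (rule finite_subset) (simp add: finite_ambient)
  define f where "f U = (SOME v. v \<in> U \<and> v \<noteq> 0)" for U :: "(nat \<Rightarrow> 'a) set"
  have f: "f U \<in> U" "f U \<noteq> 0" if "U \<in> C" for U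
  proof -
    have "\<exists>v\<in>U. v \<noteq> 0" using that grass by (intro V.ex_nonzero_if_dim_pos) (auto simp: grass_def)
    then have "f U \<in> U \<and> f U \<noteq> 0" unfolding f_def
      using someI_ex[of "\<lambda>v. v \<in> U \<and> v \<noteq> 0"] by blast
    then show "f U \<in> U" "f U \<noteq> 0" by simp_all
  qed
  have fiber: "card {U\<in>C. f U = y} \<le> 2" for y
  proof (rule ccontr)
    assume "\<not> ?thesis"
    then have "3 \<le> card {U\<in>C. f U = y}" by simp
    then obtain A where A: "A \<subseteq> {U\<in>C. f U = y}" "card A = 3"
      by (rule obtain_subset_with_card_n)
    then obtain U1 U2 U3 where U: "A = {U1, U2, U3}" unfolding card_3_iff by blast
    have "A \<subseteq> C" using A(1) by blast
    then have "5 \<le> V.dim (V.span (\<Union>A))"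
      using code A(2) by (simp add: covering_code_def)
    moreover have "\<Union>A = U1 \<union> U2 \<union> U3" using U by auto
    moreover have "V.dim (V.span (U1 \<union> U2 \<union> U3)) \<le> 4"
    proof (rule V.dim_span_union3_le_4)
      have inC: "U1 \<in> C" "U2 \<in> C" "U3 \<in> C" and fy: "f U1 = y" "f U2 = y" "f U3 = y"
        using A(1) U by auto
      then show "V.dim U1 = 2" "V.dim U2 = 2" "V.dim U3 = 2"
        using grass by (auto simp: grass_def)
      show "y \<in> U1" "y \<in> U2" "y \<in> U3" "y \<noteq> 0"
        using f inC fy by metis+
    qed
    ultimately show False by simp
  qed
  have "f ` C \<subseteq> ambient n" using f grass by (auto simp: grass_def)
  then have "card (f ` C) \<le> card (UNIV :: 'a set) ^ n"
    using card_mono[OF finite_ambient] by (simp only: card_ambient)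
  moreover have "card C \<le> 2 * card (f ` C)"
    using \<open>finite C\<close> fiber by (rule card_le_mult_card_image)
  ultimately show ?thesis by simp
qed

(* The xor/and normal form of bit arithmetic installed by Z2 obstructs ordinary ring reasoning. *)
declare add_bit_eq_xor [simp del] mult_bit_eq_and [simp del]

lemma bit_add_eq_0_iff: "(x :: bit) + y = 0 \<longleftrightarrow> x = y"
  by (cases x; cases y) simp_all

lemma fun_bit_add_eq_0_iff: "(f :: 'i \<Rightarrow> bit) + g = 0 \<longleftrightarrow> f = g"
  by (simp add: fun_eq_iff bit_add_eq_0_iff)

lemma UNIV_bit: "(UNIV :: bit set) = {0, 1}"
  using bit_not_zero_iff by blast

instance bit :: finite
  by standard (simp add: UNIV_bit)

lemma card_UNIV_bit: "card (UNIV :: bit set) = 2"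
  by (simp add: UNIV_bit)

lemma span_singleton_bit: "V.span {p :: nat \<Rightarrow> bit} = {0, p}"
  unfolding V.span_singleton UNIV_bit by (simp add: fvec_scale_def zero_fun_def)

fun shift :: "(nat \<Rightarrow> 'a::zero) \<Rightarrow> nat \<Rightarrow> 'a" where
  "shift v 0 = 0"
| "shift v (Suc i) = v i"

lemma shift_add: "shift (v + w) = shift v + shift (w :: nat \<Rightarrow> 'a::monoid_add)"
proof
  show "shift (v + w) i = (shift v + shift w) i" for i by (cases i) simp_all
qed

lemma shift_in_ambient:
  assumes "v \<in> ambient n"
  shows "shift v \<in> ambient (Suc n)"
  unfolding ambient_def
proof (intro CollectI allI impI)
  fix i assume "Suc n \<le> i"
  then obtain k where "i = Suc (n + k)" using le_Suc_ex by force
  then show "shift v i = 0" using assms by (simp add: ambient_def)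
qed

fun code_gen :: "(nat \<Rightarrow> bit) \<Rightarrow> nat \<Rightarrow> bit" where
  "code_gen a 0 = 1"
| "code_gen a (Suc 0) = 0"
| "code_gen a (Suc (Suc i)) = a i"

lemma code_gen_in_ambient:
  assumes "a \<in> ambient m"
  shows "code_gen a \<in> ambient (Suc (Suc m))"
  unfolding ambient_def
proof (intro CollectI allI impI)
  fix i assume "Suc (Suc m) \<le> i"
  then obtain k where "i = Suc (Suc (m + k))" using le_Suc_ex by force
  then show "code_gen a i = 0" using assms by (simp add: ambient_def)
qed

lemma inj_code_gen: "inj code_gen"
  by (intro injI ext) (metis code_gen.simps(3))

definition code_plane :: "(nat \<Rightarrow> bit) \<Rightarrow> (nat \<Rightarrow> bit) set" where
  "code_plane a = V.span {code_gen a, shift (code_gen a)}"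

lemma code_gen_neq_shift: "code_gen a \<noteq> shift (code_gen a)"
  by (metis code_gen.simps(1) shift.simps(1) zero_neq_one)

lemma independent_code_gen_shift: "V.independent {code_gen a, shift (code_gen a)}"
proof -
  have "V.independent {shift (code_gen a)}"
    by (simp add: fun_eq_iff) (metis code_gen.simps(1) shift.simps(2) zero_neq_one)
  then show ?thesis by (rule independent_insert_pivot[where i = 0]) simp_all
qed

lemma code_plane_in_grass:
  assumes "a \<in> ambient m"
  shows "code_plane a \<in> grass (m + 3) 2"
proof -
  have "V.dim (code_plane a) = 2"
    unfolding code_plane_def
    using V.dim_span_eq_card_independent[OF independent_code_gen_shift] code_gen_neq_shift by simp
  moreover have "code_gen a \<in> ambient (m + 3)" "shift (code_gen a) \<in> ambient (m + 3)"
    using code_gen_in_ambient[OF assms] shift_in_ambient[OF code_gen_in_ambient[OF assms]]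
      ambient_mono[of "Suc (Suc m)" "m + 3"] by (auto simp: eval_nat_numeral)
  then have "code_plane a \<subseteq> ambient (m + 3)"
    unfolding code_plane_def by (intro V.span_minimal ambient_subspace) auto
  ultimately show ?thesis by (simp add: grass_def code_plane_def V.subspace_span)
qed

lemma inj_code_plane: "inj code_plane"
proof (rule injI)
  fix a b assume eq: "code_plane a = code_plane b"
  have "code_gen b \<in> code_plane b" unfolding code_plane_def by (simp add: V.span_base)
  then have "code_gen b \<in> code_plane a" by (simp add: eq)
  then obtain s t where st: "code_gen b = fvec_scale s (code_gen a) + fvec_scale t (shift (code_gen a))"
    unfolding code_plane_def by (rule span_pair_elim)
  have "s = 1" "t = 0"
    using fun_cong[OF st, of 0] fun_cong[OF st, of 1] by (simp_all add: fvec_scale_def)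
  then have "code_gen b = code_gen a" using st by (simp add: fvec_scale_def fun_eq_iff)
  then show "a = b" using inj_code_gen by (simp add: inj_eq)
qed

lemma dim_span_code_planes_ge_5:
  assumes "a \<in> ambient m" "b \<in> ambient m" "c \<in> ambient m" "a \<noteq> b" "a \<noteq> c" "b \<noteq> c"
  shows "5 \<le> V.dim (V.span (code_plane a \<union> code_plane b \<union> code_plane c))"
proof -
  define S where "S = V.span (code_plane a \<union> code_plane b \<union> code_plane c)"
  have gen_in_S: "code_gen x \<in> S" "shift (code_gen x) \<in> S" if "x \<in> {a, b, c}" for x
    using that unfolding S_def code_plane_def by (auto intro: V.span_base)
  define p where "p = code_gen a + code_gen b"
  define q where "q = code_gen a + code_gen c"
  have pq_in_S: "p \<in> S" "q \<in> S" "shift p \<in> S" "shift q \<in> S"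
    unfolding p_def q_def shift_add using gen_in_S by (auto intro: V.span_add simp: S_def)
  have pq_01: "p 0 = 0" "p 1 = 0" "q 0 = 0" "q 1 = 0" by (simp_all add: p_def q_def)
  have "p \<noteq> 0" "q \<noteq> 0" "q \<noteq> p"
    using assms(4-6) inj_code_gen by (auto simp: p_def q_def fun_bit_add_eq_0_iff inj_eq)
  have "p \<in> ambient (Suc (Suc m))" "q \<in> ambient (Suc (Suc m))"
    using code_gen_in_ambient assms(1-3) unfolding p_def q_def
    by (auto intro: V.subspace_add[OF ambient_subspace])
  then obtain t where t: "p t \<noteq> 0 \<or> q t \<noteq> 0" "\<And>i. t < i \<Longrightarrow> p i = 0 \<and> q i = 0"
    using \<open>p \<noteq> 0\<close> by (rule ex_last_nonzero_coord) blast
  \<comment> \<open>Shifting whichever of \<open>p, q\<close> is nonzero at \<open>t\<close> gives a pivot beyond both supports.\<close>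
  obtain r where r: "r \<in> S" "r (Suc t) \<noteq> 0" "r 0 = 0" "r 1 = 0"
    using t(1) pq_in_S pq_01 by (metis shift.simps One_nat_def)
  define B where "B = {code_gen a, shift (code_gen a), r, q, p}"
  have "V.independent B" "card B = 5"
  proof -
    have "V.independent {q, p}"
      by (rule V.independent_insertI) (use \<open>p \<noteq> 0\<close> \<open>q \<noteq> 0\<close> \<open>q \<noteq> p\<close> in \<open>simp_all add: span_singleton_bit\<close>)
    moreover have "q \<notin> {p}" using \<open>q \<noteq> p\<close> by simp
    moreover have "V.independent {r, q, p}" "r \<notin> {q, p}"
      by (rule independent_insert_pivot[where i = "Suc t"], fact, use t r in auto)+
    moreover have "V.independent {shift (code_gen a), r, q, p}" "shift (code_gen a) \<notin> {r, q, p}"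
      by (rule independent_insert_pivot[where i = 1], fact, use r pq_01 in auto)+
    moreover have "V.independent B" "code_gen a \<notin> {shift (code_gen a), r, q, p}"
      unfolding B_def by (rule independent_insert_pivot[where i = 0], fact, use r pq_01 code_gen_neq_shift in auto)+
    ultimately show "V.independent B" "card B = 5" by (auto simp: B_def)
  qed
  moreover have "B \<subseteq> S" using gen_in_S pq_in_S r by (auto simp: B_def)
  moreover have "S \<subseteq> ambient (m + 3)"
    unfolding S_def using code_plane_in_grass assms(1-3)
    by (intro V.span_minimal ambient_subspace) (auto simp: grass_def)
  then have "finite S" by (rule finite_subset) (rule finite_ambient)
  ultimately show ?thesis unfolding S_def[symmetric] using V.card_le_dim_if_independent by metis
qed

lemma card_code_planes: "card (code_plane ` ambient m) = 2 ^ m"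
  using card_image[OF inj_on_subset[OF inj_code_plane subset_UNIV]]
  by (simp add: card_ambient card_UNIV_bit)

lemma covering_code_code_planes: "covering_code (m + 3) 2 3 3 (code_plane ` ambient m)"
  unfolding covering_code_def
proof (intro conjI allI impI)
  show "code_plane ` ambient m \<subseteq> grass (m + 3) 2" using code_plane_in_grass by blast
  fix A assume A: "A \<subseteq> code_plane ` ambient m" "card A = 3"
  then obtain X Y Z where XYZ: "A = {X, Y, Z}" "X \<noteq> Y" "X \<noteq> Z" "Y \<noteq> Z"
    unfolding card_3_iff by blast
  with A have "X \<in> code_plane ` ambient m" "Y \<in> code_plane ` ambient m" "Z \<in> code_plane ` ambient m"
    by auto
  then obtain a b c where abc: "a \<in> ambient m" "b \<in> ambient m" "c \<in> ambient m"
    and "X = code_plane a" "Y = code_plane b" "Z = code_plane c"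
    by blast
  with XYZ have "a \<noteq> b" "a \<noteq> c" "b \<noteq> c" "\<Union>A = code_plane a \<union> code_plane b \<union> code_plane c"
    by auto
  with abc show "2 + 3 \<le> V.dim (V.span (\<Union>A))"
    using dim_span_code_planes_ge_5 by simp
qed

lemma B2_cards_bounded:
  "{card C | C :: (nat \<Rightarrow> bit) set set. covering_code n 2 3 3 C} \<subseteq> {..2 * 2 ^ n}"
  using covering_code_card_le by (fastforce simp: card_UNIV_bit)

lemma covering_code_card_le_B2:
  assumes "covering_code n 2 3 3 (C :: (nat \<Rightarrow> bit) set set)"
  shows "card C \<le> B2 n 2 3 3"
  unfolding B2_def using assms finite_subset[OF B2_cards_bounded] by (blast intro: Max_ge)

lemma B2_le: "B2 n 2 3 3 \<le> 2 * 2 ^ n"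
proof -
  have "covering_code n 2 3 3 ({} :: (nat \<Rightarrow> bit) set set)" by (simp add: covering_code_def)
  then show ?thesis
    unfolding B2_def using B2_cards_bounded finite_subset[OF B2_cards_bounded]
    by (subst Max_le_iff) auto
qed

lemma B2_ge: "2 ^ m \<le> B2 (m + 3) 2 3 3"
  using covering_code_card_le_B2[OF covering_code_code_planes] card_code_planes by metis

theorem mainTheorem9:
  shows "(\<lambda>n. real (B2 n 2 3 3)) \<in> \<Theta>(\<lambda>n. 2 ^ n)"
proof (rule bigthetaI')
  show "(1 / 8 :: real) > 0" "(2 :: real) > 0" by simp_all
  show "\<forall>\<^sub>F n in sequentially. 1 / 8 * norm ((2::real) ^ n) \<le> norm (real (B2 n 2 3 3))
          \<and> norm (real (B2 n 2 3 3)) \<le> 2 * norm ((2::real) ^ n)"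
    using eventually_ge_at_top[of 3]
  proof eventually_elim
    case (elim n)
    then obtain m where n: "n = m + 3" using le_Suc_ex by (metis add.commute)
    have "(2::real) ^ n = 8 * 2 ^ m" by (simp add: n power_add)
    moreover have "real (2 ^ m) \<le> real (B2 n 2 3 3)" "real (B2 n 2 3 3) \<le> real (2 * 2 ^ n)"
      using B2_ge[of m] B2_le[of n] unfolding n of_nat_le_iff .
    ultimately show ?case by simp
  qed
qed

end
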